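(* Let $(L_i)_{i\in\mathbb Z}$ be integers with $L_i\ge1$ and $|L_i-L_{i+1}|\le1$ for all $i$. Let $(x_i)_{i\in\mathbb Z}$ be real numbers. For each $i$, define $y_i(k)$ for $0\le k\le L_i$ by $y_i(0)=\frac{1}{2L_i+1}x_i$; $y_i(1)=y_i(0)+y_{i-1}(0)+y_{i+1}(0)$; $y_i(2)=y_i(1)+(y_{i-1}(1)-y_{i-1}(0))+(y_{i+1}(1)-y_{i+1}(0))-2y_i(0)$ (if $L_i\ge2$); and for $2\le k\le L_i-1$, $y_i(k+1)=y_i(k)+(y_{i-1}(k)-y_{i-1}(k-1))+(y_{i+1}(k)-y_{i+1}(k-1))-(y_i(k-1)-y_i(k-2))$. Then all quantities used in these updates are defined, and for every $i$, $$y_i(L_i)=\frac{1}{2L_i+1}x_i+\sum_{j=1}^{L_i}\Big(\frac{1}{2L_{i-j}+1}x_{i-j}+\frac{1}{2L_{i+j}+1}x_{i+j}\Big).$$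
   Context: Sensors indexed by $i\in\mathbb Z$ on a line, each with time-invariant measurement $x_i$, individual window parameter $L_i$, and consensus variable $y_i(k)$; communication only with immediate neighbors $i\pm1$. *)

theory Defs
  imports Main Complex_Main
begin

end

theory Submission
  imports Defs
begin

text \<open>
  With a(i) = x(i) / (2 L(i) + 1), each y(i, k) is the window sum W(k, i) of a over the indices
  j with |j - i| \<le> k. The increment W(k, i) - W(k - 1, i) = a(i - k) + a(i + k) consists of the two
  endpoints of the window, so the increments at i - 1 and i + 1 supply the new endpoints
  a(i \<plusminus> (k + 1)) together with a(i \<plusminus> (k - 1)), and the latter are exactly the increment at i
  one step earlier. Since L changes by at most one between neighbours, the neighbours' values
  needed for step k + 1 \<le> L(i) exist, and induction on k gives y(i, L(i)) = W(L(i), i).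
\<close>

definition window_sum :: "(int \<Rightarrow> real) \<Rightarrow> int \<Rightarrow> int \<Rightarrow> real" where
  "window_sum a k i = a i + (\<Sum>j = 1..k. a (i - j) + a (i + j))"

lemma window_sum_0 [simp]: "window_sum a 0 i = a i"
  by (simp add: window_sum_def)

lemma window_sum_diff:
  assumes "1 \<le> k"
  shows "window_sum a k i - window_sum a (k - 1) i = a (i - k) + a (i + k)"
proof -
  have "{1..k} = insert k {1..k - 1}" using assms by auto
  then show ?thesis by (simp add: window_sum_def)
qed

lemma window_sum_1: "window_sum a 1 i = a i + a (i - 1) + a (i + 1)"
  using window_sum_diff[of 1 a i] by simp

lemma window_sum_2:
  "window_sum a 2 i = window_sum a 1 i + (window_sum a 1 (i - 1) - a (i - 1))
     + (window_sum a 1 (i + 1) - a (i + 1)) - 2 * a i"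
  using window_sum_diff[of 2 a i] by (simp add: window_sum_1 algebra_simps)

lemma window_sum_recurrence:
  assumes "2 \<le> k"
  shows "window_sum a (k + 1) i = window_sum a k i
     + (window_sum a k (i - 1) - window_sum a (k - 1) (i - 1))
     + (window_sum a k (i + 1) - window_sum a (k - 1) (i + 1))
     - (window_sum a (k - 1) i - window_sum a (k - 2) i)"
proof -
  have "window_sum a (k + 1) i - window_sum a k i = a (i - (k + 1)) + a (i + (k + 1))"
    using window_sum_diff[of "k + 1" a i] assms by simp
  moreover have "window_sum a (k - 1) i - window_sum a (k - 2) i = a (i - (k - 1)) + a (i + (k - 1))"
    using window_sum_diff[of "k - 1" a i] assms by (simp add: algebra_simps)
  moreover have "window_sum a k (i - 1) - window_sum a (k - 1) (i - 1) = a (i - (k + 1)) + a (i + (k - 1))"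
    using window_sum_diff[of k a "i - 1"] assms by (simp add: algebra_simps)
  moreover have "window_sum a k (i + 1) - window_sum a (k - 1) (i + 1) = a (i - (k - 1)) + a (i + (k + 1))"
    using window_sum_diff[of k a "i + 1"] assms by (simp add: algebra_simps)
  ultimately show ?thesis by linarith
qed

lemma neighbour_bounds:
  fixes L :: "int \<Rightarrow> int"
  assumes "\<And>i. \<bar>L i - L (i + 1)\<bar> \<le> 1" and "k \<le> L i - 1"
  shows "k \<le> L (i - 1)" and "k \<le> L (i + 1)"
  using assms(1)[of "i - 1"] assms(1)[of i] assms(2) by auto

lemma recurrence_eq_window_sum:
  fixes L :: "int \<Rightarrow> int" and a :: "int \<Rightarrow> real" and y :: "int \<Rightarrow> int \<Rightarrow> real"
  assumes L_lip: "\<And>i. \<bar>L i - L (i + 1)\<bar> \<le> 1"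
    and y0: "\<And>i. y i 0 = a i"
    and y1: "\<And>i. y i 1 = y i 0 + y (i - 1) 0 + y (i + 1) 0"
    and y2: "\<And>i. L i \<ge> 2 \<Longrightarrow>
              y i 2 = y i 1 + (y (i - 1) 1 - y (i - 1) 0) + (y (i + 1) 1 - y (i + 1) 0) - 2 * y i 0"
    and yrec: "\<And>i k. 2 \<le> k \<Longrightarrow> k \<le> L i - 1 \<Longrightarrow>
              y i (k + 1) = y i k + (y (i - 1) k - y (i - 1) (k - 1))
                 + (y (i + 1) k - y (i + 1) (k - 1)) - (y i (k - 1) - y i (k - 2))"
    and "0 \<le> k" and "k \<le> L i"
  shows "y i k = window_sum a k i"
  using assms(6,7)
proof (induction "nat k" arbitrary: k i rule: less_induct)
  case less
  have y1_eq: "y j 1 = window_sum a 1 j" for j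
    by (simp add: y1 y0 window_sum_1)
  consider "k = 0" | "k = 1" | "k = 2" | m where "k = m + 1" "2 \<le> m"
  proof -
    have "k = 0 \<or> k = 1 \<or> k = 2 \<or> (k = (k - 1) + 1 \<and> 2 \<le> k - 1)"
      using less.prems(1) by linarith
    then show thesis using that by blast
  qed
  then show ?case
  proof cases
    case 1
    then show ?thesis by (simp add: y0)
  next
    case 2
    then show ?thesis by (simp add: y1_eq)
  next
    case 3
    then show ?thesis
      using less.prems y2[of i] by (simp add: y1_eq y0 window_sum_2)
  next
    case 4
    have "m \<le> L i - 1" using 4 less.prems by simp
    then have bounds: "m \<le> L (i - 1)" "m \<le> L (i + 1)" "m \<le> L i"
      using neighbour_bounds[of L, OF L_lip] by auto
    have IH: "y j n = window_sum a n j" if "0 \<le> n" "n \<le> m" "n \<le> L j" for j n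
      using less.hyps[of n j] that 4 by simp
    have "y i k = y i m + (y (i - 1) m - y (i - 1) (m - 1))
                 + (y (i + 1) m - y (i + 1) (m - 1)) - (y i (m - 1) - y i (m - 2))"
      using yrec[of m i] 4 less.prems by simp
    also have "\<dots> = window_sum a k i"
      using window_sum_recurrence[of m a i] 4 bounds by (simp add: IH)
    finally show ?thesis .
  qed
qed

theorem mainTheorem4:
  fixes L :: "int \<Rightarrow> int" and x :: "int \<Rightarrow> real" and y :: "int \<Rightarrow> int \<Rightarrow> real"
  assumes L_pos: "\<And>i. L i \<ge> 1"
    and L_lip: "\<And>i. \<bar>L i - L (i + 1)\<bar> \<le> 1"
    and y0: "\<And>i. y i 0 = (1 / (2 * real_of_int (L i) + 1)) * x i"
    and y1: "\<And>i. y i 1 = y i 0 + y (i - 1) 0 + y (i + 1) 0"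
    and y2: "\<And>i. L i \<ge> 2 \<Longrightarrow>
              y i 2 = y i 1 + (y (i - 1) 1 - y (i - 1) 0) + (y (i + 1) 1 - y (i + 1) 0) - 2 * y i 0"
    and yrec: "\<And>i k. 2 \<le> k \<Longrightarrow> k \<le> L i - 1 \<Longrightarrow>
              y i (k + 1) = y i k + (y (i - 1) k - y (i - 1) (k - 1))
                 + (y (i + 1) k - y (i + 1) (k - 1)) - (y i (k - 1) - y i (k - 2))"
  shows "(\<forall>i. 0 \<le> L (i - 1) \<and> 0 \<le> L (i + 1)
            \<and> (L i \<ge> 2 \<longrightarrow> 1 \<le> L (i - 1) \<and> 1 \<le> L (i + 1))
            \<and> (\<forall>k. 2 \<le> k \<and> k \<le> L i - 1 \<longrightarrow> k \<le> L (i - 1) \<and> k \<le> L (i + 1)))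
       \<and> (\<forall>i. y i (L i) = (1 / (2 * real_of_int (L i) + 1)) * x i
            + (\<Sum>j = 1..L i. (1 / (2 * real_of_int (L (i - j)) + 1)) * x (i - j)
                             + (1 / (2 * real_of_int (L (i + j)) + 1)) * x (i + j)))"
proof (intro conjI allI impI)
  fix i
  show "0 \<le> L (i - 1)" "0 \<le> L (i + 1)" "1 \<le> L (i - 1)" "1 \<le> L (i + 1)"
    using L_pos[of "i - 1"] L_pos[of "i + 1"] by simp_all
  fix k assume "2 \<le> k \<and> k \<le> L i - 1"
  then show "k \<le> L (i - 1)" "k \<le> L (i + 1)"
    using neighbour_bounds[of L, OF L_lip] by auto
next
  fix i
  define a where "a j = (1 / (2 * real_of_int (L j) + 1)) * x j" for j
  have "y i (L i) = window_sum a (L i) i"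
    using recurrence_eq_window_sum[of L y a, OF L_lip _ y1 y2 yrec] L_pos[of i] by (simp add: y0 a_def)
  then show "y i (L i) = (1 / (2 * real_of_int (L i) + 1)) * x i
            + (\<Sum>j = 1..L i. (1 / (2 * real_of_int (L (i - j)) + 1)) * x (i - j)
                             + (1 / (2 * real_of_int (L (i + j)) + 1)) * x (i + j))"
    by (simp add: window_sum_def a_def)
qed

end
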